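(* For every positive integer $r$, the symplectic graph $Sp(2r)$ is not $3$-e.c.
   Context: A graph $G$ with vertex set $V$ is $n$-e.c. ($n$-existentially complete) if for every pair of disjoint subsets $A,B\subseteq V$ with $|A\cup B|=n$ (either of $A$, $B$ may be empty) there is a vertex $z\notin A\cup B$ adjacent to every vertex of $A$ and to no vertex of $B$. Let $\mathbb{F}_2$ be the binary field and $N$ the $2r\times 2r$ block-diagonal matrix over $\mathbb{F}_2$ with $r$ diagonal blocks equal to $\begin{pmatrix}0&1\\1&0\end{pmatrix}$. The symplectic graph $Sp(2r)$ has vertex set $\mathbb{F}_2^{2r}\setminus\{0\}$, with distinct vertices $x,y$ adjacent if and only if $x^T N y=1$. *)

theory Defs
  imports Main
begin

definition n_ec :: "nat \<Rightarrow> 'a set \<Rightarrow> ('a \<Rightarrow> 'a \<Rightarrow> bool) \<Rightarrow> bool" where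
  "n_ec n V adj \<longleftrightarrow>
     (\<forall>A B. A \<subseteq> V \<longrightarrow> B \<subseteq> V \<longrightarrow> A \<inter> B = {} \<longrightarrow> card (A \<union> B) = n \<longrightarrow>
        (\<exists>z\<in>V. z \<notin> A \<union> B \<and> (\<forall>a\<in>A. adj z a) \<and> (\<forall>b\<in>B. \<not> adj z b)))"

text \<open>Vectors of F_2^(2r) are represented as functions nat => bool (True = 1) that vanish
  at all coordinates >= 2r; coordinates are indexed 0..2r-1.\<close>
definition F2vecs :: "nat \<Rightarrow> (nat \<Rightarrow> bool) set" where
  "F2vecs m = {x. \<forall>i\<ge>m. x i = False}"

text \<open>The symplectic form x^T N y over F_2, with N block diagonal with r blocks [[0,1],[1,0]]:
  sum over k < r of x_(2k) y_(2k+1) + x_(2k+1) y_(2k), computed mod 2.\<close>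
definition symp_form :: "nat \<Rightarrow> (nat \<Rightarrow> bool) \<Rightarrow> (nat \<Rightarrow> bool) \<Rightarrow> bool" where
  "symp_form r x y \<longleftrightarrow>
     odd (\<Sum>k<r. (of_bool (x (2*k) \<and> y (2*k+1)) + of_bool (x (2*k+1) \<and> y (2*k)) :: nat))"

definition Sp_vertices :: "nat \<Rightarrow> (nat \<Rightarrow> bool) set" where
  "Sp_vertices r = F2vecs (2*r) - {(\<lambda>_. False)}"

definition Sp_adj :: "nat \<Rightarrow> (nat \<Rightarrow> bool) \<Rightarrow> (nat \<Rightarrow> bool) \<Rightarrow> bool" where
  "Sp_adj r x y \<longleftrightarrow> x \<noteq> y \<and> symp_form r x y"

end

theory Submission
  imports Defs
begin

(* The symplectic form x^T N y is linear over F_2 in its second argument.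
   Hence if a vertex z is adjacent to two vertices x and y, then z^T N (x + y) = 1 + 1 = 0,
   so z is not adjacent to x + y.  For r >= 1 the vectors e_0, e_1 and e_0 + e_1 are three
   distinct vertices of Sp(2r); taking A = {e_0, e_1, e_0 + e_1} and B = {} violates the
   3-e.c. property. *)

definition vadd :: "(nat \<Rightarrow> bool) \<Rightarrow> (nat \<Rightarrow> bool) \<Rightarrow> nat \<Rightarrow> bool" where
  "vadd x y = (\<lambda>i. x i \<noteq> y i)"

lemma symp_form_Suc:
  "symp_form (Suc r) z x \<longleftrightarrow>
     (symp_form r z x \<noteq> ((z (2*r) \<and> x (2*r+1)) \<noteq> (z (2*r+1) \<and> x (2*r))))"
  unfolding symp_form_def by auto

lemma symp_form_vadd:
  "symp_form r z (vadd x y) \<longleftrightarrow> (symp_form r z x \<noteq> symp_form r z y)"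
proof (induction r)
  case 0
  then show ?case by (simp add: symp_form_def)
next
  case (Suc r)
  then show ?case by (simp add: symp_form_Suc vadd_def) blast
qed

lemma Sp_adj_vadd:
  assumes "Sp_adj r z x" and "Sp_adj r z y"
  shows "\<not> Sp_adj r z (vadd x y)"
  using assms by (simp add: Sp_adj_def symp_form_vadd)

lemma not_3_ec_if_no_common_neighbour:
  assumes "{x, y, w} \<subseteq> V" and "x \<noteq> y" "x \<noteq> w" "y \<noteq> w"
    and "\<And>z. z \<in> V \<Longrightarrow> adj z x \<Longrightarrow> adj z y \<Longrightarrow> \<not> adj z w"
  shows "\<not> n_ec 3 V adj"
proof
  assume "n_ec 3 V adj"
  moreover have "card ({x, y, w} \<union> {}) = 3" using assms(2-4) by simp
  ultimately obtain z where "z \<in> V" "\<forall>a\<in>{x, y, w}. adj z a"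
    using assms(1) unfolding n_ec_def by (metis Int_empty_right empty_subsetI)
  then show False using assms(5) by blast
qed

definition e0 :: "nat \<Rightarrow> bool" where "e0 = (\<lambda>i. i = 0)"
definition e1 :: "nat \<Rightarrow> bool" where "e1 = (\<lambda>i. i = 1)"

lemma basis_triangle:
  assumes "r \<ge> 1"
  shows "{e0, e1, vadd e0 e1} \<subseteq> Sp_vertices r"
    and "e0 \<noteq> e1" "e0 \<noteq> vadd e0 e1" "e1 \<noteq> vadd e0 e1"
proof -
  have at: "e0 0" "\<not> e0 1" "\<not> e1 0" "e1 1" "vadd e0 e1 0" "vadd e0 e1 1"
    by (simp_all add: e0_def e1_def vadd_def)
  then show "e0 \<noteq> e1" "e0 \<noteq> vadd e0 e1" "e1 \<noteq> vadd e0 e1" by metis+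
  have "e0 \<noteq> (\<lambda>_. False)" "e1 \<noteq> (\<lambda>_. False)" "vadd e0 e1 \<noteq> (\<lambda>_. False)"
    using at by metis+
  moreover have "{e0, e1, vadd e0 e1} \<subseteq> F2vecs (2*r)"
    using assms by (auto simp: F2vecs_def e0_def e1_def vadd_def)
  ultimately show "{e0, e1, vadd e0 e1} \<subseteq> Sp_vertices r"
    by (simp add: Sp_vertices_def)
qed

theorem mainTheorem1:
  fixes r :: nat
  assumes "r \<ge> 1"
  shows "\<not> n_ec 3 (Sp_vertices r) (Sp_adj r)"
proof (rule not_3_ec_if_no_common_neighbour[OF basis_triangle[OF assms]])
  fix z
  assume "Sp_adj r z e0" and "Sp_adj r z e1"
  then show "\<not> Sp_adj r z (vadd e0 e1)" by (rule Sp_adj_vadd)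
qed

end
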